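(* Consider the coupled opinion–network system described in the context with memory weight dynamics, and assume there is a constant $c>0$ with $\phi(r)>c$ for all $r\in[-2,2]$. Then the opinion diameter $D(t)=\max_{i,j}|x_j(t)-x_i(t)|$ satisfies, for all $t\ge0$, $D(t)\le \exp\big(-c^2(t+e^{-t}-1)\big)\,D(0)$.
   Context: There are $N$ individuals with opinions $x_i(t)\in[-1,1]$ and edge weights $w_{ij}(t)\in[0,1]$. The degree is $k_i=\sum_{j=1}^N w_{ij}$. With interaction function $\phi:[-2,2]\to[0,1]$, the system with memory weight dynamics is $\frac{dx_i}{dt}=\frac{1}{k_i}\sum_{j\neq i} w_{ij}\,\phi(x_j-x_i)(x_j-x_i)$, $\frac{dw_{ij}}{dt}=\phi(x_j-x_i)-w_{ij}$ for $i\neq j$, and $w_{ii}\equiv 1$. Standing assumptions: $\phi$ is Lipschitz continuous, even, and $\phi(0)>0$; $x_1(0)\le\dots\le x_N(0)$; $w_{ii}=1$; the initial network $w(0)$ is strongly connected. *)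

theory Defs
  imports "HOL-Analysis.Analysis"
begin

text \<open>Individuals are indexed by 0..<N. Opinions: x t i; weights: w t i j.\<close>

definition degree :: "nat \<Rightarrow> (nat \<Rightarrow> nat \<Rightarrow> real) \<Rightarrow> nat \<Rightarrow> real" where
  "degree N W i = (\<Sum>j<N. W i j)"

definition edge_rel :: "nat \<Rightarrow> (nat \<Rightarrow> nat \<Rightarrow> real) \<Rightarrow> (nat \<times> nat) set" where
  "edge_rel N W = {(i, j). i < N \<and> j < N \<and> W i j > 0}"

definition strongly_connected_net :: "nat \<Rightarrow> (nat \<Rightarrow> nat \<Rightarrow> real) \<Rightarrow> bool" where
  "strongly_connected_net N W \<longleftrightarrow> (\<forall>i<N. \<forall>j<N. (i, j) \<in> (edge_rel N W)\<^sup>*)"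

definition opinion_diameter :: "nat \<Rightarrow> (nat \<Rightarrow> real) \<Rightarrow> real" where
  "opinion_diameter N X = Max {\<bar>X j - X i\<bar> | i j. i < N \<and> j < N}"

end

theory Submission
  imports Defs
begin

text \<open>Every value of \<open>\<phi>\<close> exceeds \<open>c\<close> and each memory weight relaxes towards such
values, so \<open>w\<^sub>i\<^sub>j(t) \<ge> c (1 - e\<^sup>-\<^sup>t)\<close>. Since degrees are at most \<open>N\<close>, the drift of the
spread \<open>x\<^sub>M - x\<^sub>m\<close> between a largest and a smallest opinion is then at most
\<open>-c\<^sup>2 (1 - e\<^sup>-\<^sup>t) (x\<^sub>M - x\<^sub>m)\<close>. Hence after multiplying all pairwise differences by
\<open>exp (c\<^sup>2 (t + e\<^sup>-\<^sup>t - 1))\<close>, a maximal one never increases, and a maximum principle for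
finitely many differentiable functions bounds all of them by \<open>D(0)\<close>.\<close>

lemma finite_family_strict_max_principle:
  fixes f f' :: "'k \<Rightarrow> real \<Rightarrow> real"
  assumes K: "finite K"
    and deriv: "\<And>k t. k \<in> K \<Longrightarrow> 0 \<le> t \<Longrightarrow> (f k has_real_derivative f' k t) (at t within {0..})"
    and init: "\<And>k. k \<in> K \<Longrightarrow> f k 0 < 0"
    and at_max: "\<And>k t. k \<in> K \<Longrightarrow> 0 \<le> t \<Longrightarrow> 0 \<le> f k t \<Longrightarrow>
                   (\<And>l. l \<in> K \<Longrightarrow> f l t \<le> f k t) \<Longrightarrow> f' k t < 0"
    and "k \<in> K" "0 \<le> T"
  shows "f k T < 0"
proof (rule ccontr)
  assume "\<not> f k T < 0"
  define C where "C = (\<Union>l\<in>K. {0..T} \<inter> f l -` {0..})"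
  have "continuous_on {0..T} (f l)" if "l \<in> K" for l
    by (rule DERIV_continuous_on, rule DERIV_subset[OF deriv[OF that]]) auto
  then have "closed C"
    unfolding C_def using K by (intro closed_UN ballI continuous_closed_preimage) auto
  moreover have "T \<in> C" "bdd_below C"
    using \<open>\<not> f k T < 0\<close> \<open>k \<in> K\<close> \<open>0 \<le> T\<close> by (force simp: C_def not_less intro: bdd_belowI[of _ 0])+
  ultimately have "Inf C \<in> C"
    using closed_contains_Inf by blast
  define ts where "ts = Inf C"
  obtain l where l: "l \<in> K" "0 \<le> ts" "0 \<le> f l ts" "ts \<le> T"
    using \<open>Inf C \<in> C\<close> by (auto simp: C_def ts_def)
  have "ts \<noteq> 0"
    using l init by force
  obtain m where m: "m \<in> K" "Max ((\<lambda>j. f j ts) ` K) = f m ts"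
    using obtains_MAX[OF K, of "\<lambda>j. f j ts"] l(1) by blast
  have m_max: "f j ts \<le> f m ts" if "j \<in> K" for j
    using m(2) K that by (metis Max_ge finite_imageI imageI)
  have "f' m ts < 0"
    using at_max[OF m(1) l(2)] m_max l by (meson order.trans)
  then obtain d where "0 < d" and d: "\<forall>h>0. ts - h \<in> {0..} \<longrightarrow> h < d \<longrightarrow> f m ts < f m (ts - h)"
    using has_real_derivative_neg_dec_left[OF deriv[OF m(1) l(2)]] by blast
  define h where "h = min d ts / 2"
  have "0 < h" "h < d" "h \<le> ts"
    using \<open>0 < d\<close> \<open>ts \<noteq> 0\<close> l(2) by (auto simp: h_def)
  then have "0 \<le> f m (ts - h)"
    using d m_max[OF l(1)] l(3) by force
  then have "ts - h \<in> C"
    using \<open>h \<le> ts\<close> \<open>0 < h\<close> m(1) l(4) by (auto simp: C_def)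
  then have "ts \<le> ts - h"
    unfolding ts_def using \<open>bdd_below C\<close> by (rule cInf_lower)
  then show False
    using \<open>0 < h\<close> by simp
qed

lemma finite_family_max_principle:
  fixes f f' :: "'k \<Rightarrow> real \<Rightarrow> real"
  assumes K: "finite K"
    and deriv: "\<And>k t. k \<in> K \<Longrightarrow> 0 \<le> t \<Longrightarrow> (f k has_real_derivative f' k t) (at t within {0..})"
    and init: "\<And>k. k \<in> K \<Longrightarrow> f k 0 \<le> M"
    and at_max: "\<And>k t. k \<in> K \<Longrightarrow> 0 \<le> t \<Longrightarrow> (\<And>l. l \<in> K \<Longrightarrow> f l t \<le> f k t) \<Longrightarrow> f' k t \<le> 0"
    and "k \<in> K" "0 \<le> T"
  shows "f k T \<le> M"
proof (rule field_le_epsilon)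
  fix e :: real
  assume "0 < e"
  \<comment> \<open>Tilting by the slope \<open>e / (1 + T)\<close> makes the derivative at a maximum strictly negative.\<close>
  define \<epsilon> where "\<epsilon> = e / (1 + T)"
  have "0 < \<epsilon>"
    using \<open>0 < e\<close> \<open>0 \<le> T\<close> by (simp add: \<epsilon>_def)
  have "f k T - M - \<epsilon> * (1 + T) < 0"
  proof (rule finite_family_strict_max_principle[where f = "\<lambda>l t. f l t - M - \<epsilon> * (1 + t)"
        and f' = "\<lambda>l t. f' l t - \<epsilon>"])
    show "((\<lambda>t. f l t - M - \<epsilon> * (1 + t)) has_real_derivative f' l t - \<epsilon>) (at t within {0..})"
      if "l \<in> K" "0 \<le> t" for l t
      using deriv[OF that] by (auto intro!: derivative_eq_intros)
    show "f' l t - \<epsilon> < 0" if "l \<in> K" "0 \<le> t"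
      and "\<And>j. j \<in> K \<Longrightarrow> f j t - M - \<epsilon> * (1 + t) \<le> f l t - M - \<epsilon> * (1 + t)" for l t
      using at_max[OF that(1,2)] that(3) \<open>0 < \<epsilon>\<close> by force
  qed (use K init \<open>0 < \<epsilon>\<close> \<open>k \<in> K\<close> \<open>0 \<le> T\<close> in force)+
  then show "f k T \<le> M + e"
    using \<open>0 \<le> T\<close> by (simp add: \<epsilon>_def)
qed

lemma relaxation_lower_bound:
  fixes h q :: "real \<Rightarrow> real"
  assumes deriv: "\<And>s. 0 \<le> s \<Longrightarrow> (h has_real_derivative q s - h s) (at s within {0..})"
    and source: "\<And>s. 0 \<le> s \<Longrightarrow> c \<le> q s"
    and "0 \<le> h 0" "0 \<le> t"
  shows "c * (1 - exp (- t)) \<le> h t"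
proof -
  have "exp t * (c * (1 - exp (- t)) - h t) \<le> 0"
  proof (rule finite_family_max_principle[where K = "{()}"
        and f = "\<lambda>_ s. exp s * (c * (1 - exp (- s)) - h s)" and f' = "\<lambda>_ s. exp s * (c - q s)"])
    show "((\<lambda>s. exp s * (c * (1 - exp (- s)) - h s)) has_real_derivative exp s * (c - q s))
        (at s within {0..})" if "0 \<le> s" for s
      using deriv[OF that] by (auto intro!: derivative_eq_intros simp: algebra_simps exp_minus_inverse)
  qed (use source \<open>0 \<le> h 0\<close> \<open>0 \<le> t\<close> in \<open>auto intro: mult_nonneg_nonpos\<close>)
  then show ?thesis
    by (simp add: mult_le_0_iff)
qed

lemma degree_bounds:
  assumes "i < N" "W i i = 1" "\<forall>j<N. 0 \<le> W i j \<and> W i j \<le> 1"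
  shows "1 \<le> degree N W i" "degree N W i \<le> N"
proof -
  show "1 \<le> degree N W i"
    using assms member_le_sum[of i "{..<N}" "W i"] by (simp add: degree_def)
  have "(\<Sum>j<N. W i j) \<le> (\<Sum>j<N. 1)"
    using assms(3) by (intro sum_mono) auto
  then show "degree N W i \<le> N"
    by (simp add: degree_def)
qed

definition consensus_drift :: "nat \<Rightarrow> (real \<Rightarrow> real) \<Rightarrow> (nat \<Rightarrow> nat \<Rightarrow> real) \<Rightarrow> (nat \<Rightarrow> real) \<Rightarrow> nat \<Rightarrow> real"
  where "consensus_drift N \<phi> W X i =
    1 / degree N W i * (\<Sum>j\<in>{..<N} - {i}. W i j * \<phi> (X j - X i) * (X j - X i))"

lemma consensus_drift_at_max:
  assumes "M < N" "\<forall>l<N. X l \<le> X M"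
    and "\<forall>l<N. a \<le> W M l" "\<forall>l<N. c \<le> \<phi> (X l - X M)"
    and "0 \<le> a" "0 \<le> c" "1 \<le> degree N W M" "degree N W M \<le> N"
  shows "consensus_drift N \<phi> W X M \<le> a * c / N * (\<Sum>l<N. X l - X M)"
proof -
  have "W M l * \<phi> (X l - X M) * (X l - X M) \<le> a * c * (X l - X M)" if "l < N" for l
    using assms that by (intro mult_right_mono_neg mult_mono) auto
  then have "(\<Sum>l\<in>{..<N} - {M}. W M l * \<phi> (X l - X M) * (X l - X M))
      \<le> a * c * (\<Sum>l\<in>{..<N} - {M}. X l - X M)"
    unfolding sum_distrib_left by (intro sum_mono) auto
  also have "(\<Sum>l\<in>{..<N} - {M}. X l - X M) = (\<Sum>l<N. X l - X M)"
    using \<open>M < N\<close> by (simp add: sum_diff1)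
  finally have "consensus_drift N \<phi> W X M \<le> 1 / degree N W M * (a * c * (\<Sum>l<N. X l - X M))"
    unfolding consensus_drift_def using assms by (intro mult_left_mono) auto
  also have "\<dots> \<le> 1 / N * (a * c * (\<Sum>l<N. X l - X M))"
    using assms by (intro mult_right_mono_neg mult_nonneg_nonpos sum_nonpos frac_le) auto
  finally show ?thesis
    by simp
qed

text \<open>The minimum case is the maximum case for the reflected opinions \<open>-X\<close> and interaction
  \<open>\<lambda>r. \<phi> (-r)\<close>, so no evenness of \<open>\<phi>\<close> is needed.\<close>

lemma consensus_drift_reflect:
  "consensus_drift N \<phi> W X i = - consensus_drift N (\<lambda>r. \<phi> (- r)) W (\<lambda>l. - X l) i"
proof -
  have "(\<Sum>j\<in>{..<N} - {i}. W i j * \<phi> (X j - X i) * (X i - X j))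
      = - (\<Sum>j\<in>{..<N} - {i}. W i j * \<phi> (X j - X i) * (X j - X i))"
    by (simp add: sum_negf[symmetric] right_diff_distrib)
  then show ?thesis
    by (simp add: consensus_drift_def)
qed

lemma consensus_drift_at_min:
  assumes "m < N" "\<forall>l<N. X m \<le> X l"
    and "\<forall>l<N. a \<le> W m l" "\<forall>l<N. c \<le> \<phi> (X l - X m)"
    and "0 \<le> a" "0 \<le> c" "1 \<le> degree N W m" "degree N W m \<le> N"
  shows "a * c / N * (\<Sum>l<N. X l - X m) \<le> consensus_drift N \<phi> W X m"
proof -
  have "consensus_drift N (\<lambda>r. \<phi> (- r)) W (\<lambda>l. - X l) m \<le> a * c / N * (\<Sum>l<N. - X l - - X m)"
    by (rule consensus_drift_at_max) (use assms in auto)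
  moreover have "(\<Sum>l<N. - X l - - X m) = - (\<Sum>l<N. X l - X m)"
    by (simp add: sum_negf[symmetric])
  ultimately show ?thesis
    by (simp add: consensus_drift_reflect[of N \<phi> W X m])
qed

lemma consensus_drift_spread:
  assumes "M < N" "m < N" "\<forall>l<N. X m \<le> X l \<and> X l \<le> X M"
    and "\<forall>i<N. \<forall>l<N. a \<le> W i l \<and> c \<le> \<phi> (X l - X i)"
    and "\<forall>i<N. 1 \<le> degree N W i \<and> degree N W i \<le> N"
    and "0 \<le> a" "0 \<le> c"
  shows "consensus_drift N \<phi> W X M - consensus_drift N \<phi> W X m \<le> - (a * c) * (X M - X m)"
proof -
  have "consensus_drift N \<phi> W X M - consensus_drift N \<phi> W X m
      \<le> a * c / N * ((\<Sum>l<N. X l - X M) - (\<Sum>l<N. X l - X m))"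
    using consensus_drift_at_max[of M N X a W c \<phi>] consensus_drift_at_min[of m N X a W c \<phi>] assms
    by (simp add: right_diff_distrib)
  also have "\<dots> = a * c / N * (N * (X m - X M))"
    by (simp add: sum_subtractf right_diff_distrib)
  also have "\<dots> = - (a * c) * (X M - X m)"
    using \<open>M < N\<close> by (simp add: algebra_simps)
  finally show ?thesis .
qed

lemma maximal_gap_pair_extremal:
  fixes X :: "nat \<Rightarrow> real"
  assumes "p \<in> {..<N} \<times> {..<N}"
    and "\<forall>q \<in> {..<N} \<times> {..<N}. X (snd q) - X (fst q) \<le> X (snd p) - X (fst p)"
  shows "\<forall>l<N. X (fst p) \<le> X l \<and> X l \<le> X (snd p)"
proof (intro allI impI conjI)
  fix l
  assume "l < N"
  then show "X (fst p) \<le> X l" "X l \<le> X (snd p)"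
    using assms(2)[rule_format, of "(l, snd p)"] assms(2)[rule_format, of "(fst p, l)"] assms(1)
    by (auto simp: mem_Times_iff)
qed

lemma finite_opinion_gaps:
  fixes X :: "nat \<Rightarrow> real"
  shows "finite {\<bar>X j - X i\<bar> | i j. i < N \<and> j < N}"
  using finite_image_set2[of "\<lambda>i. i < N" "\<lambda>j. j < N" "\<lambda>i j. \<bar>X j - X i\<bar>"] by simp

lemma opinion_diameter_ge:
  assumes "i < N" "j < N"
  shows "\<bar>X j - X i\<bar> \<le> opinion_diameter N X"
  unfolding opinion_diameter_def using finite_opinion_gaps assms by (blast intro: Max_ge)

lemma opinion_diameter_le:
  assumes "1 \<le> N" "\<And>i j. i < N \<Longrightarrow> j < N \<Longrightarrow> X j - X i \<le> B"
  shows "opinion_diameter N X \<le> B"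
proof -
  have "\<bar>X 0 - X 0\<bar> \<in> {\<bar>X j - X i\<bar> | i j. i < N \<and> j < N}"
    using \<open>1 \<le> N\<close> by (auto intro!: exI[of _ 0])
  then show ?thesis
    unfolding opinion_diameter_def using finite_opinion_gaps assms(2)
    by (subst Max_le_iff) (auto simp: abs_le_iff)
qed

locale memory_opinion_dynamics =
  fixes N :: nat and \<phi> :: "real \<Rightarrow> real" and c :: real
    and x :: "real \<Rightarrow> nat \<Rightarrow> real" and w :: "real \<Rightarrow> nat \<Rightarrow> nat \<Rightarrow> real"
  assumes c_pos: "0 < c"
    and phi_bounds: "\<forall>r\<in>{-2..2}. c < \<phi> r \<and> \<phi> r \<le> 1"
    and x_range: "\<forall>t\<ge>0. \<forall>i<N. x t i \<in> {-1..1}"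
    and w_range: "\<forall>t\<ge>0. \<forall>i<N. \<forall>j<N. w t i j \<in> {0..1}"
    and w_diag: "\<forall>t\<ge>0. \<forall>i<N. w t i i = 1"
    and x_ode: "\<forall>t\<ge>0. \<forall>i<N.
      ((\<lambda>s. x s i) has_real_derivative consensus_drift N \<phi> (w t) (x t) i) (at t within {0..})"
    and w_ode: "\<forall>t\<ge>0. \<forall>i<N. \<forall>j<N. i \<noteq> j \<longrightarrow>
      ((\<lambda>s. w s i j) has_real_derivative \<phi> (x t j - x t i) - w t i j) (at t within {0..})"
begin

lemma opinion_gap_range:
  assumes "0 \<le> t" "i < N" "j < N"
  shows "x t j - x t i \<in> {-2..2}"
proof -
  have "x t j \<in> {-1..1}" "x t i \<in> {-1..1}"
    using x_range assms by auto
  then show ?thesis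
    by auto
qed

lemma weight_lower_bound:
  assumes "0 \<le> t" "i < N" "j < N"
  shows "c * (1 - exp (- t)) \<le> w t i j"
proof (cases "i = j")
  case True
  have "c * (1 - exp (- t)) \<le> c"
    using c_pos by (simp add: algebra_simps)
  also have "c < 1"
    using phi_bounds by force
  finally show ?thesis
    using True assms w_diag by simp
next
  case False
  show ?thesis
    by (rule relaxation_lower_bound[where q = "\<lambda>s. \<phi> (x s j - x s i)"])
      (use assms False w_ode w_range phi_bounds opinion_gap_range in \<open>auto intro: less_imp_le\<close>)
qed

lemma spread_drift_bound:
  assumes "0 \<le> t" "M < N" "m < N" "\<forall>l<N. x t m \<le> x t l \<and> x t l \<le> x t M"
  shows "consensus_drift N \<phi> (w t) (x t) M - consensus_drift N \<phi> (w t) (x t) m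
    \<le> - (c\<^sup>2 * (1 - exp (- t))) * (x t M - x t m)"
proof -
  have "\<forall>i<N. 1 \<le> degree N (w t) i \<and> degree N (w t) i \<le> N"
    using degree_bounds[of _ N "w t"] w_diag w_range \<open>0 \<le> t\<close> by auto
  then have "consensus_drift N \<phi> (w t) (x t) M - consensus_drift N \<phi> (w t) (x t) m
      \<le> - (c * (1 - exp (- t)) * c) * (x t M - x t m)"
    using assms weight_lower_bound phi_bounds opinion_gap_range c_pos
    by (intro consensus_drift_spread) (auto intro: less_imp_le)
  then show ?thesis
    by (simp add: power2_eq_square algebra_simps)
qed

lemma scaled_gap_le_initial_diameter:
  assumes "i < N" "j < N" "0 \<le> T"
  shows "(x T j - x T i) * exp (c\<^sup>2 * (T + exp (- T) - 1)) \<le> opinion_diameter N (x 0)"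
proof -
  define E where "E t = exp (c\<^sup>2 * (t + exp (- t) - 1))" for t
  define r where "r t = c\<^sup>2 * (1 - exp (- t))" for t
  define v where "v t i = consensus_drift N \<phi> (w t) (x t) i" for t i
  let ?gap = "\<lambda>p t. x t (snd p) - x t (fst p)"
  have E_deriv: "(E has_real_derivative E t * r t) (at t within {0..})" for t
    unfolding E_def r_def by (auto intro!: derivative_eq_intros simp: algebra_simps)
  have x_deriv: "((\<lambda>s. x s l) has_real_derivative v t l) (at t within {0..})" if "0 \<le> t" "l < N" for t l
    using x_ode that unfolding v_def by blast
  have "?gap (i, j) T * E T \<le> opinion_diameter N (x 0)"
  proof (rule finite_family_max_principle[where K = "{..<N} \<times> {..<N}" and f = "\<lambda>p t. ?gap p t * E t"
        and f' = "\<lambda>p t. (v t (snd p) - v t (fst p)) * E t + ?gap p t * (E t * r t)"])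
    fix p and t :: real
    assume p: "p \<in> {..<N} \<times> {..<N}" and "0 \<le> t"
    show "((\<lambda>t. ?gap p t * E t) has_real_derivative
        (v t (snd p) - v t (fst p)) * E t + ?gap p t * (E t * r t)) (at t within {0..})"
      using DERIV_mult[OF DERIV_diff[OF x_deriv x_deriv] E_deriv] p \<open>0 \<le> t\<close>
      by (auto simp: algebra_simps)
    assume p_max: "\<And>q. q \<in> {..<N} \<times> {..<N} \<Longrightarrow> ?gap q t * E t \<le> ?gap p t * E t"
    have gap_max: "\<forall>q \<in> {..<N} \<times> {..<N}. ?gap q t \<le> ?gap p t"
      using p_max by (simp add: E_def)
    then have "\<forall>l<N. x t (fst p) \<le> x t l \<and> x t l \<le> x t (snd p)"
      using p by (intro maximal_gap_pair_extremal)
    then have "v t (snd p) - v t (fst p) + r t * ?gap p t \<le> 0"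
      using spread_drift_bound[OF \<open>0 \<le> t\<close>] p unfolding v_def r_def by force
    have "(v t (snd p) - v t (fst p)) * E t + ?gap p t * (E t * r t)
        = E t * (v t (snd p) - v t (fst p) + r t * ?gap p t)"
      by (simp add: algebra_simps)
    also have "\<dots> \<le> 0"
      using \<open>v t (snd p) - v t (fst p) + r t * ?gap p t \<le> 0\<close>
      by (intro mult_nonneg_nonpos) (auto simp: E_def)
    finally show "(v t (snd p) - v t (fst p)) * E t + ?gap p t * (E t * r t) \<le> 0" .
  next
    show "?gap p 0 * E 0 \<le> opinion_diameter N (x 0)" if "p \<in> {..<N} \<times> {..<N}" for p
      using opinion_diameter_ge[of "fst p" N "snd p" "x 0"] that by (auto simp: E_def)
  qed (use assms in auto)
  then show ?thesis
    by (simp add: E_def)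
qed

lemma opinion_diameter_decay:
  assumes "1 \<le> N" "0 \<le> t"
  shows "opinion_diameter N (x t) \<le> exp (- (c\<^sup>2 * (t + exp (- t) - 1))) * opinion_diameter N (x 0)"
proof (rule opinion_diameter_le[OF \<open>1 \<le> N\<close>])
  fix i j
  assume "i < N" "j < N"
  then show "x t j - x t i \<le> exp (- (c\<^sup>2 * (t + exp (- t) - 1))) * opinion_diameter N (x 0)"
    using scaled_gap_le_initial_diameter[of i j t] \<open>0 \<le> t\<close>
    by (simp add: exp_minus field_simps)
qed

end

theorem proposition2:
  fixes N :: nat and \<phi> :: "real \<Rightarrow> real" and c :: real
    and x :: "real \<Rightarrow> nat \<Rightarrow> real" and w :: "real \<Rightarrow> nat \<Rightarrow> nat \<Rightarrow> real"
  assumes N_pos: "N \<ge> 1"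
    and phi_range: "\<forall>r\<in>{-2..2}. 0 \<le> \<phi> r \<and> \<phi> r \<le> 1"
    and phi_lip: "\<exists>L. L-lipschitz_on {-2..2} \<phi>"
    and phi_even: "\<forall>r\<in>{-2..2}. \<phi> (-r) = \<phi> r"
    and phi_0: "\<phi> 0 > 0"
    and c_pos: "c > 0"
    and phi_c: "\<forall>r\<in>{-2..2}. \<phi> r > c"
    and x_range: "\<forall>t\<ge>0. \<forall>i<N. x t i \<in> {-1..1}"
    and w_range: "\<forall>t\<ge>0. \<forall>i<N. \<forall>j<N. w t i j \<in> {0..1}"
    and w_diag: "\<forall>t\<ge>0. \<forall>i<N. w t i i = 1"
    and x_sorted: "\<forall>i j. i \<le> j \<longrightarrow> j < N \<longrightarrow> x 0 i \<le> x 0 j"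
    and w0_sc: "strongly_connected_net N (w 0)"
    and x_ode: "\<forall>t\<ge>0. \<forall>i<N.
        ((\<lambda>s. x s i) has_real_derivative
          (1 / degree N (w t) i) *
            (\<Sum>j\<in>{..<N} - {i}. w t i j * \<phi> (x t j - x t i) * (x t j - x t i)))
        (at t within {0..})"
    and w_ode: "\<forall>t\<ge>0. \<forall>i<N. \<forall>j<N. i \<noteq> j \<longrightarrow>
        ((\<lambda>s. w s i j) has_real_derivative (\<phi> (x t j - x t i) - w t i j))
        (at t within {0..})"
  shows "\<forall>t\<ge>0. opinion_diameter N (x t)
           \<le> exp (- (c\<^sup>2 * (t + exp (- t) - 1))) * opinion_diameter N (x 0)"
proof -
  interpret memory_opinion_dynamics N \<phi> c x w
  proof
    show "\<forall>t\<ge>0. \<forall>i<N. ((\<lambda>s. x s i) has_real_derivative consensus_drift N \<phi> (w t) (x t) i)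
      (at t within {0..})"
      using x_ode by (simp add: consensus_drift_def)
  qed (use c_pos phi_range phi_c x_range w_range w_diag w_ode in auto)
  show ?thesis
    using opinion_diameter_decay N_pos by blast
qed

end
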